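(* Let $P=[p_{f,k}]$, $f\in[0,F)$, $k\in[0,K)$, be a $(K,F,S)$ MRA. Consider the MADC model with $F$ batches of files $B_0,\dots,B_{F-1}$, $F$ mapper nodes indexed by $[0,F)$, and $K$ reducer nodes indexed by $[0,K)$, in which mapper node $f$ stores exactly the batch $B_f$ (so $M_f=\{B_f\}$) and reducer node $k$ is connected exactly to the mapper nodes in $\{f\in[0,F):\ p_{f,k}=*\}$. Then this model has computation load $r=1$, and the communication load $$L(1)=\frac{S}{KF}+\sum_{g=2}^{K}\frac{S_g}{KF(g-1)}$$ is achievable, where $S_g$ denotes the number of integers in $[0,S)$ that appear exactly $g$ times in $P$.
   Context: Notation: $[0,n)=\{0,1,\dots,n-1\}$, $[n]=\{1,\dots,n\}$. MADC (multi-access distributed computing) model: There are $\Lambda$ mapper nodes indexed by $[0,\Lambda)$ and $K$ reducer nodes indexed by $[0,K)$. There are $N$ input files $w_0,\dots,w_{N-1}\in\mathbb{F}_{2^d}$ and $Q$ output functions $\phi_q:\mathbb{F}_{2^d}^N\to\mathbb{F}_{2^b}$, $q\in[0,Q)$, of the form $\phi_q(w_0,\dots,w_{N-1})=h_q(v_{q,0},\dots,v_{q,N-1})$, where $v_{q,n}=g_{q,n}(w_n)\in\mathbb{F}_{2^t}$ is called an intermediate value (IV). Each reducer node $k$ is assigned a set $\mathcal W_k\subseteq[0,Q)$ of $Q/K$ output functions, these sets being pairwise disjoint. The files are partitioned into $F$ disjoint batches of $N/F$ files each. Map phase: each mapper node $\lambda$ stores a set $M_\lambda$ of batches and computes all IVs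 $v_{q,n}$, $q\in[0,Q)$, for all files $w_n$ in its stored batches. Each reducer node is connected to a set of mapper nodes and has access to every batch stored at any mapper node it is connected to, together with all IVs computed from those batches. Shuffle phase: each reducer node $k$ broadcasts to all other reducer nodes, error-free, a message $\mathbf X_k$ of $l_k$ bits that is a function of the IVs it has access to. Reduce phase: each reducer node $k$ must recover all IVs $v_{q,n}$ with $q\in\mathcal W_k$, $n\in[0,N)$, from the received messages and the IVs it has access to. The computation load is $r=\sum_{\lambda=0}^{\Lambda-1}|M_\lambda|/F$ and the communication load is $L=\sum_{k=0}^{K-1}l_k/(QNt)$. A communication load $L$ is achievable for a given model (given batches, mapper storage and mapper–reducer connections) if there exists a shuffle/reduce scheme satisfying all decoding requirements that attains $L$ (for a suitable choice of the number of files per batch, the number of functions per reducer, and the IV length $t$). Map-Reduce Array (MRA): For positive integers $K,F,S$, an $F\times K$ array $P=[p_{f,k}]$, $f\in[0,F)$, $k\in[0,K)$, whose entries are either the symbol $*$ or integers from $[0,S)$, with every integer of $[0,S)$ occurring in $P$, is a $(K,F,S)$ MRA if: (C1) each integer occurs more than once in $P$; (C2) whenever two distinct entries satisfy $p_{f_1,k_1}=p_{f_2,k_2}=s$ with $s$ an integer, then $f_1\neq f_2$, $k_1\neq k_2$, and $p_{f_1,k_2}=p_{f_2,k_1}=*$. *)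

theory Defs
  imports Complex_Main
begin

text \<open>An F x K array; entry None encodes the symbol *, entry Some s encodes the integer s.\<close>

definition occ :: "nat \<Rightarrow> nat \<Rightarrow> (nat \<Rightarrow> nat \<Rightarrow> nat option) \<Rightarrow> nat \<Rightarrow> nat" where
  "occ K F P s = card {(f, k). f < F \<and> k < K \<and> P f k = Some s}"

definition is_MRA :: "nat \<Rightarrow> nat \<Rightarrow> nat \<Rightarrow> (nat \<Rightarrow> nat \<Rightarrow> nat option) \<Rightarrow> bool" where
  "is_MRA K F S P \<longleftrightarrow>
     0 < K \<and> 0 < F \<and> 0 < S \<and>
     (\<forall>f<F. \<forall>k<K. \<forall>s. P f k = Some s \<longrightarrow> s < S) \<and>
     (\<forall>s<S. \<exists>f<F. \<exists>k<K. P f k = Some s) \<and>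
     (\<forall>s<S. occ K F P s > 1) \<and>
     (\<forall>f1<F. \<forall>k1<K. \<forall>f2<F. \<forall>k2<K. \<forall>s.
        (f1, k1) \<noteq> (f2, k2) \<and> P f1 k1 = Some s \<and> P f2 k2 = Some s \<longrightarrow>
        f1 \<noteq> f2 \<and> k1 \<noteq> k2 \<and> P f1 k2 = None \<and> P f2 k1 = None)"

definition S_count :: "nat \<Rightarrow> nat \<Rightarrow> nat \<Rightarrow> (nat \<Rightarrow> nat \<Rightarrow> nat option) \<Rightarrow> nat \<Rightarrow> nat" where
  "S_count K F S P g = card {s. s < S \<and> occ K F P s = g}"

text \<open>A model: \<Lambda> mapper nodes, K reducer nodes, F batches; M \<lambda> is the set of batch indices
  stored at mapper \<lambda>; conn k is the set of mapper nodes reducer k is connected to.\<close>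

definition comp_load :: "nat \<Rightarrow> nat \<Rightarrow> (nat \<Rightarrow> nat set) \<Rightarrow> real" where
  "comp_load \<Lambda> F M = (\<Sum>j<\<Lambda>. real (card (M j))) / real F"

text \<open>Intermediate values: v q n i is bit i of v_{q,n} (an element of F_{2^t}, viewed as t bits);
  values outside q<Q, n<N, i<t are fixed to False.\<close>
definition iv_space :: "nat \<Rightarrow> nat \<Rightarrow> nat \<Rightarrow> (nat \<Rightarrow> nat \<Rightarrow> nat \<Rightarrow> bool) set" where
  "iv_space Q N t = {v. \<forall>q n i. v q n i \<longrightarrow> q < Q \<and> n < N \<and> i < t}"

text \<open>Parameters chosen by the scheme:
  \<eta> = N/F files per batch (file n lies in batch n div \<eta>), m = Q/K functions per reducer
  (reducer k is assigned W_k = {q. q div m = k}), and IV length t.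
  enc k v is the l_k-bit message of reducer k, depending only on the IVs it has access to;
  dec k recovers its assigned IVs from the other reducers' messages and its accessible IVs.\<close>
definition madc_achievable ::
  "nat \<Rightarrow> nat \<Rightarrow> nat \<Rightarrow> (nat \<Rightarrow> nat set) \<Rightarrow> (nat \<Rightarrow> nat set) \<Rightarrow> real \<Rightarrow> bool" where
  "madc_achievable \<Lambda> K F M conn L \<longleftrightarrow>
    (\<exists>(\<eta>::nat) (m::nat) (t::nat) (l::nat \<Rightarrow> nat)
       (enc::nat \<Rightarrow> (nat \<Rightarrow> nat \<Rightarrow> nat \<Rightarrow> bool) \<Rightarrow> bool list)
       (dec::nat \<Rightarrow> (nat \<Rightarrow> bool list) \<Rightarrow> (nat \<Rightarrow> nat \<Rightarrow> nat \<Rightarrow> bool) \<Rightarrow> nat \<Rightarrow> nat \<Rightarrow> nat \<Rightarrow> bool).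
      0 < \<eta> \<and> 0 < m \<and> 0 < t \<and>
      (let Q = K * m; N = F * \<eta>;
           A = (\<lambda>k. {n. n < N \<and> n div \<eta> \<in> (\<Union>j\<in>conn k \<inter> {..<\<Lambda>}. M j)});
           W = (\<lambda>k. {q. q < Q \<and> q div m = k})
       in
        (\<forall>k<K. \<forall>v\<in>iv_space Q N t. length (enc k v) = l k) \<and>
        (\<forall>k<K. \<forall>v\<in>iv_space Q N t. \<forall>v'\<in>iv_space Q N t.
            (\<forall>q n. n \<in> A k \<longrightarrow> v q n = v' q n) \<longrightarrow> enc k v = enc k v') \<and>
        (\<forall>k<K. \<forall>v\<in>iv_space Q N t. \<forall>q\<in>W k. \<forall>n<N. \<forall>i<t.
            dec k (\<lambda>j. if j < K \<and> j \<noteq> k then enc j v else [])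
                  (\<lambda>q' n'. if n' \<in> A k then v q' n' else (\<lambda>_. False)) q n i = v q n i) \<and>
        L = real (\<Sum>k<K. l k) / real (Q * N * t)))"

end

theory Submission
  imports Defs "HOL-Library.Countable_Set"
begin

text \<open>Each batch is stored at a single mapper, so r = 1.  Every integer s of the MRA occurring
  in the g columns C_s marks g reducers k \<in> C_s, each missing exactly the file in the row
  where s sits in column k, while having access (condition C2) to the files of all other
  occurrences of s.  Split each of these g missing IVs into g - 1 segments, one for every
  other reducer of C_s; reducer j \<in> C_s broadcasts the XOR of the segments assigned to it.
  Every reducer of C_s knows all but one summand of each of the g - 1 XORs it hears, and
  so recovers its IV.  For s this costs g segments of length t/(g - 1), i.e.
  t (1 + 1/(g - 1)) bits; summing over s gives L(1).\<close>

subsection \<open>Decodability from determination\<close>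

lemma exists_decoder:
  assumes "\<And>v v'. v \<in> V \<Longrightarrow> v' \<in> V \<Longrightarrow> obs v = obs v' \<Longrightarrow> goal v = goal v'"
  shows "\<exists>dec. \<forall>v\<in>V. dec (obs v) = goal v"
proof
  show "\<forall>v\<in>V. goal (SOME v'. v' \<in> V \<and> obs v' = obs v) = goal v"
  proof
    fix v assume "v \<in> V"
    then have "(SOME v'. v' \<in> V \<and> obs v' = obs v) \<in> V \<and> obs (SOME v'. v' \<in> V \<and> obs v' = obs v) = obs v"
      by (intro someI) auto
    then show "goal (SOME v'. v' \<in> V \<and> obs v' = obs v) = goal v"
      using assms \<open>v \<in> V\<close> by blast
  qed
qed

lemma madc_achievable_by_determination:
  fixes K F t :: nat and conn :: "nat \<Rightarrow> nat set"
    and enc :: "nat \<Rightarrow> (nat \<Rightarrow> nat \<Rightarrow> nat \<Rightarrow> bool) \<Rightarrow> bool list"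
  defines "V \<equiv> iv_space K F t"
  assumes "0 < t"
    and conn_files: "\<And>k. k < K \<Longrightarrow> conn k \<subseteq> {..<F}"
    and enc_length: "\<And>k v. k < K \<Longrightarrow> v \<in> V \<Longrightarrow> length (enc k v) = l k"
    and enc_local: "\<And>k v v'. k < K \<Longrightarrow> (\<forall>q n. n \<in> conn k \<longrightarrow> v q n = v' q n) \<Longrightarrow>
        enc k v = enc k v'"
    and determined: "\<And>k v v' n i. k < K \<Longrightarrow> v \<in> V \<Longrightarrow> v' \<in> V \<Longrightarrow>
        (\<forall>j<K. j \<noteq> k \<longrightarrow> enc j v = enc j v') \<Longrightarrow> (\<forall>q n. n \<in> conn k \<longrightarrow> v q n = v' q n) \<Longrightarrow>
        n < F \<Longrightarrow> i < t \<Longrightarrow> v k n i = v' k n i"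
  shows "madc_achievable F K F (\<lambda>f. {f}) conn (real (\<Sum>k<K. l k) / real (K * F * t))"
proof -
  define messages where "messages k v = (\<lambda>j. if j < K \<and> j \<noteq> k then enc j v else [])"
    for k and v :: "nat \<Rightarrow> nat \<Rightarrow> nat \<Rightarrow> bool"
  define known where "known k v = (\<lambda>q (n::nat). if n \<in> conn k then v q n else (\<lambda>_. False))"
    for k and v :: "nat \<Rightarrow> nat \<Rightarrow> nat \<Rightarrow> bool"
  define wanted where "wanted k v = (\<lambda>q n i. q = k \<and> n < F \<and> i < t \<and> v q n i)"
    for k and v :: "nat \<Rightarrow> nat \<Rightarrow> nat \<Rightarrow> bool"
  have "\<forall>k\<in>{..<K}. \<exists>D. \<forall>v\<in>V. D (messages k v, known k v) = wanted k v"
  proof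
    fix k assume "k \<in> {..<K}"
    show "\<exists>D. \<forall>v\<in>V. D (messages k v, known k v) = wanted k v"
    proof (rule exists_decoder)
      fix v v' assume v: "v \<in> V" "v' \<in> V"
        and "(messages k v, known k v) = (messages k v', known k v')"
      then have m: "messages k v = messages k v'" and a: "known k v = known k v'"
        by simp_all
      have "enc j v = enc j v'" if "j < K" "j \<noteq> k" for j
        using fun_cong[OF m, of j] that unfolding messages_def by simp
      moreover have "v q n = v' q n" if "n \<in> conn k" for q n
        using fun_cong[OF fun_cong[OF a, of q], of n] that unfolding known_def by simp
      ultimately show "wanted k v = wanted k v'"
        unfolding wanted_def using determined \<open>k \<in> {..<K}\<close> v by (intro ext) blast
    qed
  qed
  then obtain D where D: "\<And>k v. k < K \<Longrightarrow> v \<in> V \<Longrightarrow> D k (messages k v, known k v) = wanted k v"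
    by (metis lessThan_iff)
  have files: "{n. n < F * 1 \<and> n div 1 \<in> (\<Union>j\<in>conn k \<inter> {..<F}. {j})} = conn k" if "k < K" for k
    using conn_files[OF that] by auto
  have funs: "{q. q < K * 1 \<and> q div 1 = k} = {k}" if "k < K" for k
    using that by auto
  have decode: "D k (messages k v, known k v) k n i = v k n i"
    if "k < K" "v \<in> V" "n < F" "i < t" for k v n i
    using D[OF that(1,2)] that(3,4) unfolding wanted_def by simp
  show ?thesis
    unfolding madc_achievable_def Let_def
    apply (rule exI[of _ 1], rule exI[of _ 1], rule exI[of _ t], rule exI[of _ l], rule exI[of _ enc],
           rule exI[of _ "\<lambda>k ms ac. D k (ms, ac)"])
    apply (intro conjI allI ballI impI)
          apply (simp_all only: files funs)
         apply (simp_all add: \<open>0 < t\<close> flip: V_def messages_def known_def)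
    using enc_length enc_local decode by blast+
qed

definition xor_set :: "'a set \<Rightarrow> ('a \<Rightarrow> bool) \<Rightarrow> bool" where
  "xor_set A b \<longleftrightarrow> odd (card {x \<in> A. b x})"

lemma xor_set_cong: "(\<And>x. x \<in> A \<Longrightarrow> b x = b' x) \<Longrightarrow> xor_set A b = xor_set A b'"
  unfolding xor_set_def by (metis (mono_tags, lifting) Collect_cong)

lemma xor_set_remove:
  assumes "finite A" "a \<in> A"
  shows "xor_set A b = (b a \<noteq> xor_set (A - {a}) b)"
proof -
  have "{x \<in> A. b x} = (if b a then insert a {x \<in> A - {a}. b x} else {x \<in> A - {a}. b x})"
    using assms by auto
  then show ?thesis
    unfolding xor_set_def using assms by (simp add: card_insert_if)
qed

locale map_reduce_array =
  fixes K F S :: nat and P :: "nat \<Rightarrow> nat \<Rightarrow> nat option"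
  assumes MRA: "is_MRA K F S P"
begin

lemma positive: "0 < K" "0 < F"
  using MRA unfolding is_MRA_def by auto

lemma entry_less: "f < F \<Longrightarrow> k < K \<Longrightarrow> P f k = Some s \<Longrightarrow> s < S"
  using MRA unfolding is_MRA_def by blast

lemma occ_gt_1: "s < S \<Longrightarrow> 1 < occ K F P s"
  using MRA unfolding is_MRA_def by blast

lemma repeated_entry:
  "\<lbrakk>f1 < F; k1 < K; f2 < F; k2 < K; (f1, k1) \<noteq> (f2, k2); P f1 k1 = Some s; P f2 k2 = Some s\<rbrakk>
   \<Longrightarrow> f1 \<noteq> f2 \<and> k1 \<noteq> k2 \<and> P f1 k2 = None \<and> P f2 k1 = None"
  using MRA unfolding is_MRA_def by blast

definition cols :: "nat \<Rightarrow> nat set" where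
  "cols s = {k. k < K \<and> (\<exists>f<F. P f k = Some s)}"

definition row :: "nat \<Rightarrow> nat \<Rightarrow> nat" where
  "row s k = (THE f. f < F \<and> P f k = Some s)"

lemma cols_subset: "cols s \<subseteq> {..<K}"
  unfolding cols_def by auto

lemma finite_cols: "finite (cols s)"
  using finite_subset[OF cols_subset] by blast

lemma row_eq: "f < F \<Longrightarrow> k < K \<Longrightarrow> P f k = Some s \<Longrightarrow> row s k = f"
  unfolding row_def by (rule the_equality) (use repeated_entry[of _ k _ k s] in auto)

lemma row_entry: "k \<in> cols s \<Longrightarrow> row s k < F \<and> P (row s k) k = Some s"
  unfolding cols_def using row_eq by auto

lemma row_of_other_col: "k \<in> cols s \<Longrightarrow> j \<in> cols s \<Longrightarrow> k \<noteq> j \<Longrightarrow> P (row s k) j = None"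
  using repeated_entry[of "row s k" k "row s j" j s] row_entry cols_subset by blast

lemma card_cols: "card (cols s) = occ K F P s"
proof -
  let ?C = "{(f, k). f < F \<and> k < K \<and> P f k = Some s}"
  have "cols s = snd ` ?C" unfolding cols_def by force
  moreover have "inj_on snd ?C"
    by (auto simp: inj_on_def dest: repeated_entry)
  ultimately show ?thesis unfolding occ_def by (simp add: card_image)
qed

lemma card_cols_bounds: "s < S \<Longrightarrow> 2 \<le> card (cols s) \<and> card (cols s) \<le> K"
  using occ_gt_1[of s] card_cols[of s] card_mono[OF _ cols_subset[of s]] by auto

subsection \<open>The coded shuffle\<close>

text \<open>The IV length t = K! is divisible by every g - 1 with 2 \<le> g \<le> K.\<close>

definition seg_len :: "nat \<Rightarrow> nat" where
  "seg_len s = fact K div (card (cols s) - 1)"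

lemma mult_seg_len:
  assumes "s < S" shows "(card (cols s) - 1) * seg_len s = fact K"
proof -
  have "card (cols s) - 1 dvd fact K"
    using card_cols_bounds[OF assms] by (intro dvd_fact) auto
  then show ?thesis unfolding seg_len_def by simp
qed

text \<open>Segment number seg_idx s k j of the IV missing at reducer k is sent by reducer j.\<close>

definition seg_idx :: "nat \<Rightarrow> nat \<Rightarrow> nat \<Rightarrow> nat" where
  "seg_idx s k = to_nat_on (cols s - {k})"

lemma bij_seg_idx: "k \<in> cols s \<Longrightarrow> bij_betw (seg_idx s k) (cols s - {k}) {..<card (cols s) - 1}"
  unfolding seg_idx_def using to_nat_on_finite[of "cols s - {k}"] finite_cols by simp

definition coded_bit :: "nat \<Rightarrow> nat \<Rightarrow> (nat \<Rightarrow> nat \<Rightarrow> nat \<Rightarrow> bool) \<Rightarrow> nat \<Rightarrow> bool" where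
  "coded_bit j s v c =
     xor_set (cols s - {j}) (\<lambda>k. v k (row s k) (seg_idx s k j * seg_len s + c))"

definition segment :: "nat \<Rightarrow> nat \<Rightarrow> (nat \<Rightarrow> nat \<Rightarrow> nat \<Rightarrow> bool) \<Rightarrow> bool list" where
  "segment j s v = (if j \<in> cols s then map (coded_bit j s v) [0..<seg_len s] else [])"

definition message :: "nat \<Rightarrow> (nat \<Rightarrow> nat \<Rightarrow> nat \<Rightarrow> bool) \<Rightarrow> bool list" where
  "message j v = concat (map (\<lambda>s. segment j s v) [0..<S])"

definition message_len :: "nat \<Rightarrow> nat" where
  "message_len j = (\<Sum>s<S. if j \<in> cols s then seg_len s else 0)"

abbreviation accessible :: "nat \<Rightarrow> nat set" where
  "accessible k \<equiv> {f. f < F \<and> P f k = None}"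

lemma length_segment: "length (segment j s v) = (if j \<in> cols s then seg_len s else 0)"
  unfolding segment_def by simp

lemma length_message: "length (message j v) = message_len j"
  unfolding message_def message_len_def length_concat map_map o_def length_segment
  by (simp add: interv_sum_list_conv_sum_set_nat lessThan_atLeast0)

lemma message_local:
  assumes "\<forall>q n. n \<in> accessible j \<longrightarrow> v q n = v' q n"
  shows "message j v = message j v'"
proof -
  have "coded_bit j s v = coded_bit j s v'" if "j \<in> cols s" for s
    unfolding coded_bit_def
    using assms row_entry row_of_other_col[OF _ that] by (auto intro!: xor_set_cong)
  then have "segment j s v = segment j s v'" for s
    unfolding segment_def by simp
  then show ?thesis
    unfolding message_def by simp
qed

lemma segment_eq_if_message_eq:
  assumes "message j v = message j v'" "s < S"
  shows "segment j s v = segment j s v'"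
proof -
  have "map (\<lambda>s. segment j s v) [0..<S] = map (\<lambda>s. segment j s v') [0..<S]"
    using assms(1) unfolding message_def
    by (subst concat_eq_concat_iff[symmetric]) (auto simp: length_segment zip_map_map set_zip)
  then show ?thesis using assms(2) by simp
qed

lemma message_determines_missing_iv:
  assumes "i < K"
    and messages: "\<forall>j<K. j \<noteq> i \<longrightarrow> message j v = message j v'"
    and accessible: "\<forall>q n. n \<in> accessible i \<longrightarrow> v q n = v' q n"
    and n: "n < F" and b: "b < fact K"
  shows "v i n b = v' i n b"
proof (cases "P n i")
  case None
  then show ?thesis using accessible n by auto
next
  case (Some s)
  have "s < S" using entry_less[OF n \<open>i < K\<close> Some] .
  have i: "i \<in> cols s" "row s i = n"
    unfolding cols_def using \<open>i < K\<close> n Some row_eq by auto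
  define d where "d = seg_len s"
  have d: "(card (cols s) - 1) * d = fact K"
    unfolding d_def using mult_seg_len[OF \<open>s < S\<close>] .
  then have "0 < d" by (metis fact_gt_zero mult_0_right neq0_conv)
  have "b div d < card (cols s) - 1"
    using b d by (metis less_mult_imp_div_less mult.commute)
  then have "b div d \<in> seg_idx s i ` (cols s - {i})"
    using bij_seg_idx[OF i(1)] by (simp add: bij_betw_def)
  then obtain j where j: "j \<in> cols s - {i}" "b div d = seg_idx s i j"
    by (rule imageE)
  have "segment j s v = segment j s v'"
    using segment_eq_if_message_eq[OF _ \<open>s < S\<close>] messages j(1) cols_subset by blast
  then have "map (coded_bit j s v) [0..<d] = map (coded_bit j s v') [0..<d]"
    using j(1) unfolding segment_def d_def by simp
  then have coded: "coded_bit j s v (b mod d) = coded_bit j s v' (b mod d)"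
    using \<open>0 < d\<close> by (simp add: map_eq_conv)
  define bits where "bits u = (\<lambda>k. u k (row s k) (seg_idx s k j * d + b mod d))"
    for u :: "nat \<Rightarrow> nat \<Rightarrow> nat \<Rightarrow> bool"
  have split: "coded_bit j s u (b mod d) = (bits u i \<noteq> xor_set (cols s - {j} - {i}) (bits u))" for u
    using xor_set_remove[of "cols s - {j}" i "bits u"] finite_cols[of s] i(1) j(1)
    unfolding coded_bit_def bits_def d_def by auto
  have "xor_set (cols s - {j} - {i}) (bits v) = xor_set (cols s - {j} - {i}) (bits v')"
    unfolding bits_def using accessible row_entry row_of_other_col[OF _ i(1)]
    by (intro xor_set_cong) auto
  then have "bits v i = bits v' i"
    using coded split[of v] split[of v'] by blast
  then show ?thesis
    unfolding bits_def using i(2) j(2)[symmetric] by simp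
qed

lemma sum_message_len: "(\<Sum>k<K. message_len k) = (\<Sum>s<S. occ K F P s * seg_len s)"
proof -
  have "(\<Sum>k<K. if k \<in> cols s then seg_len s else 0) = occ K F P s * seg_len s" for s
    using cols_subset[of s]
    by (simp add: sum.If_cases Int_absorb1 card_cols flip: Int_def)
  then show ?thesis
    unfolding message_len_def by (subst sum.swap) simp
qed

lemma sum_by_occurrences:
  "(\<Sum>s<S. h (occ K F P s)) = (\<Sum>g=2..K. real (S_count K F S P g) * h g)"
proof -
  have "(\<Sum>s<S. h (occ K F P s)) = (\<Sum>g=2..K. \<Sum>s\<in>{s \<in> {..<S}. occ K F P s = g}. h (occ K F P s))"
    by (rule sum.group[symmetric]) (use card_cols_bounds card_cols in auto)
  also have "\<dots> = (\<Sum>g=2..K. real (S_count K F S P g) * h g)"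
    unfolding S_count_def by (simp add: lessThan_def)
  finally show ?thesis .
qed

lemma communication_load:
  "real (\<Sum>k<K. message_len k) / real (K * F * fact K) =
   real S / real (K * F) + (\<Sum>g=2..K. real (S_count K F S P g) / (real (K * F) * real (g - 1)))"
proof -
  have per_value: "real (occ K F P s * seg_len s) / real (K * F * fact K) =
      1 / real (K * F) + 1 / (real (K * F) * real (occ K F P s - 1))" if "s < S" for s
  proof -
    have "2 \<le> occ K F P s" using card_cols_bounds[OF that] card_cols by simp
    moreover have "real (occ K F P s - 1) * real (seg_len s) = fact K"
      using mult_seg_len[OF that] unfolding card_cols by (metis of_nat_fact of_nat_mult)
    ultimately show ?thesis using positive
      by (simp add: of_nat_diff field_simps)
  qed
  have "real (\<Sum>k<K. message_len k) / real (K * F * fact K) =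
      (\<Sum>s<S. 1 / real (K * F) + 1 / (real (K * F) * real (occ K F P s - 1)))"
    unfolding sum_message_len of_nat_sum sum_divide_distrib using per_value by simp
  also have "\<dots> = real S / real (K * F) + (\<Sum>s<S. 1 / (real (K * F) * real (occ K F P s - 1)))"
    by (simp add: sum.distrib)
  also have "\<dots> = real S / real (K * F) + (\<Sum>g=2..K. real (S_count K F S P g) / (real (K * F) * real (g - 1)))"
    unfolding sum_by_occurrences[of "\<lambda>g. 1 / (real (K * F) * real (g - 1))"] by simp
  finally show ?thesis .
qed

end

theorem theorem2:
  fixes K F S :: nat and P :: "nat \<Rightarrow> nat \<Rightarrow> nat option"
  assumes "is_MRA K F S P"
  shows "comp_load F F (\<lambda>f. {f}) = 1 \<and>
         madc_achievable F K F (\<lambda>f. {f}) (\<lambda>k. {f. f < F \<and> P f k = None})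
           (real S / real (K * F) +
            (\<Sum>g=2..K. real (S_count K F S P g) / (real (K * F) * real (g - 1))))"
proof
  interpret map_reduce_array K F S P by standard (rule assms)
  show "comp_load F F (\<lambda>f. {f}) = 1"
    unfolding comp_load_def using positive by simp
  have "madc_achievable F K F (\<lambda>f. {f}) accessible
          (real (\<Sum>k<K. message_len k) / real (K * F * fact K))"
  proof (rule madc_achievable_by_determination[where enc = message])
    fix k v v' n and i :: nat
    assume "k < K" "\<forall>j<K. j \<noteq> k \<longrightarrow> message j v = message j v'"
      "\<forall>q n. n \<in> accessible k \<longrightarrow> v q n = v' q n" "n < F" "i < fact K"
    then show "v k n i = v' k n i" by (rule message_determines_missing_iv)
  qed (auto simp: length_message intro: message_local)
  then show "madc_achievable F K F (\<lambda>f. {f}) accessible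
      (real S / real (K * F) + (\<Sum>g=2..K. real (S_count K F S P g) / (real (K * F) * real (g - 1))))"
    unfolding communication_load .
qed

end
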